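(* Let $E$ be a Banach lattice. Then: (1) every un-convergent net in $E$ has an embedded sequence that is uo-convergent to the same limit. If $E$ has an order continuous norm, then moreover: (2) every un-convergent net in $E$ has an embedded sequence that is uo-convergent as well as un-convergent to the same limit; (3) a sequence in $E$ is un-convergent to $x\in E$ if and only if every subsequence has a further subsequence that is uo-convergent to $x$.
   Context: All vector lattices are real and Archimedean. A net $(x_\alpha)$ in $E$ order converges to $x$ if there is a net $y_\beta\downarrow 0$ such that for each $\beta_0$ there is $\alpha_0$ with $|x_\alpha-x|\leq y_{\beta_0}$ for $\alpha\geq\alpha_0$; it uo-converges to $x$ if $|x_\alpha-x|\wedge|y|$ order converges to $0$ for every $y\in E$. A net $(x_\alpha)$ in a Banach lattice $E$ un-converges to $x$ if $\| |x_\alpha-x|\wedge|y| \|\to0$ for every $y\in E$. Embedded sequence: given a net $(x_\alpha)_{\alpha\in A}$, a sequence $(x_{\alpha_n})_{n\geq1}$ with $\alpha_1\leq\alpha_2\leq\dotsb$ in $A$, where moreover $\alpha_1<\alpha_2<\dotsb$ when $A$ has no largest element (the $\alpha_n$ need not be cofinal). *)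

theory Defs
  imports "HOL-Analysis.Analysis"
begin

text \<open>Banach lattices: a real Banach space which is a vector lattice (ordered real
vector space whose order is a lattice) with a lattice norm.
Archimedeanity is automatic for normed lattices.\<close>

class banach_lattice = banach + ordered_real_vector + lattice +
  assumes lattice_norm: "sup x (- x) \<le> sup y (- y) \<Longrightarrow> norm x \<le> norm y"

definition labs :: "'a::banach_lattice \<Rightarrow> 'a" where
  "labs x = sup x (- x)"

definition directed :: "'i set \<Rightarrow> ('i \<Rightarrow> 'i \<Rightarrow> bool) \<Rightarrow> bool" where
  "directed A le \<longleftrightarrow> A \<noteq> {} \<and> (\<forall>a\<in>A. le a a)
     \<and> (\<forall>a\<in>A. \<forall>b\<in>A. \<forall>c\<in>A. le a b \<longrightarrow> le b c \<longrightarrow> le a c)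
     \<and> (\<forall>a\<in>A. \<forall>b\<in>A. \<exists>c\<in>A. le a c \<and> le b c)"

definition net_decr_to_zero :: "'j set \<Rightarrow> ('j \<Rightarrow> 'j \<Rightarrow> bool) \<Rightarrow> ('j \<Rightarrow> 'a::banach_lattice) \<Rightarrow> bool" where
  "net_decr_to_zero B leB y \<longleftrightarrow> directed B leB
     \<and> (\<forall>b1\<in>B. \<forall>b2\<in>B. leB b1 b2 \<longrightarrow> y b2 \<le> y b1)
     \<and> (\<forall>b\<in>B. 0 \<le> y b) \<and> (\<forall>z. (\<forall>b\<in>B. z \<le> y b) \<longrightarrow> z \<le> 0)"

text \<open>The dominating net is
indexed by a directed subset of the space type itself (any dominating net can be
reindexed by its range, so this is no restriction).\<close>
definition ord_conv :: "'i set \<Rightarrow> ('i \<Rightarrow> 'i \<Rightarrow> bool) \<Rightarrow> ('i \<Rightarrow> 'a::banach_lattice) \<Rightarrow> 'a \<Rightarrow> bool" where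
  "ord_conv A le x l \<longleftrightarrow> (\<exists>(B::'a set) leB y. net_decr_to_zero B leB (y :: 'a \<Rightarrow> 'a)
     \<and> (\<forall>b0\<in>B. \<exists>a0\<in>A. \<forall>a\<in>A. le a0 a \<longrightarrow> labs (x a - l) \<le> y b0))"

definition uo_conv :: "'i set \<Rightarrow> ('i \<Rightarrow> 'i \<Rightarrow> bool) \<Rightarrow> ('i \<Rightarrow> 'a::banach_lattice) \<Rightarrow> 'a \<Rightarrow> bool" where
  "uo_conv A le x l \<longleftrightarrow> (\<forall>u. ord_conv A le (\<lambda>a. inf (labs (x a - l)) (labs u)) 0)"

definition un_conv :: "'i set \<Rightarrow> ('i \<Rightarrow> 'i \<Rightarrow> bool) \<Rightarrow> ('i \<Rightarrow> 'a::banach_lattice) \<Rightarrow> 'a \<Rightarrow> bool" where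
  "un_conv A le x l \<longleftrightarrow> (\<forall>u. \<forall>e>0. \<exists>a0\<in>A. \<forall>a\<in>A. le a0 a \<longrightarrow>
      norm (inf (labs (x a - l)) (labs u)) < e)"

definition embedded_seq :: "'i set \<Rightarrow> ('i \<Rightarrow> 'i \<Rightarrow> bool) \<Rightarrow> (nat \<Rightarrow> 'i) \<Rightarrow> bool" where
  "embedded_seq A le s \<longleftrightarrow> (\<forall>n. s n \<in> A) \<and> (\<forall>n. le (s n) (s (Suc n)))
     \<and> ((\<not> (\<exists>m\<in>A. \<forall>a\<in>A. le a m)) \<longrightarrow> (\<forall>n. \<not> le (s (Suc n)) (s n)))"

definition order_continuous_norm :: "'a::banach_lattice itself \<Rightarrow> bool" where
  "order_continuous_norm _ \<longleftrightarrow> (\<forall>(B::'a set) leB (y :: 'a \<Rightarrow> 'a). net_decr_to_zero B leB y \<longrightarrow>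
     (\<forall>e>0. \<exists>b0\<in>B. \<forall>b\<in>B. leB b0 b \<longrightarrow> norm (y b) < e))"

end

theory Submission
  imports Defs "HOL-Library.Lattice_Algebras"
begin

text \<open>
  Write \<open>z\<^sub>\<alpha> = |x\<^sub>\<alpha> - x|\<close>. Un-convergence lets us pick indices
  \<open>\<alpha>\<^sub>0 \<le> \<alpha>\<^sub>1 \<le> \<dots>\<close> (strictly increasing if there is no largest index) such that
  \<open>z\<^sub>n = z\<^bsub>\<alpha>\<^sub>n\<^esub>\<close> is almost disjoint from its predecessors:
  \<open>\<parallel>z\<^sub>n \<sqinter> \<Sum>\<^bsub>k<n\<^esub> f\<^sub>k\<parallel> < 2\<^sup>-\<^sup>n\<close> with \<open>f\<^sub>k = 2\<^sup>-\<^sup>k z\<^sub>k / (1 + \<parallel>z\<^sub>k\<parallel>)\<close>.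
  For \<open>u = \<Sum>\<^sub>k f\<^sub>k\<close> every \<open>z\<^sub>n\<close> is dominated by a multiple of \<open>u\<close>, and
  \<open>\<parallel>z\<^sub>n \<sqinter> u\<parallel> \<le> 3 \<cdot> 2\<^sup>-\<^sup>n\<close> is summable. Then \<open>z\<^sub>n \<sqinter> w\<close> is order null for every
  \<open>w \<ge> 0\<close>: a lower bound \<open>h\<close> of its eventual upper bounds lies below \<open>(w - m u)\<^sup>+\<close> for
  every \<open>m \<ge> 1\<close> (the tails of \<open>\<Sum> z\<^sub>n \<sqinter> u\<close> tend to 0 in norm), so \<open>h\<^sup>+\<close> is
  disjoint from \<open>u\<close>, hence from every \<open>z\<^sub>n\<close>, which forces \<open>h\<^sup>+ = 0\<close>.

  An order continuous norm turns order convergence into norm convergence, so uo-convergence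
  implies un-convergence; this gives (2), and (3) follows from (1) by the subsequence
  characterisation of convergent real sequences.
\<close>

context banach_lattice
begin

subclass lattice_ab_group_add ..

end

section \<open>Elementary inequalities in Banach lattices\<close>

lemma labs_nonneg: "0 \<le> labs (a::'a::banach_lattice)"
proof -
  have "a + - a \<le> labs a + labs a"
    unfolding labs_def by (intro add_mono) auto
  then show ?thesis
    by simp
qed

lemma labs_eq_self: "0 \<le> (a::'a::banach_lattice) \<Longrightarrow> labs a = a"
  unfolding labs_def by (simp add: sup_absorb1 order_trans[of "- a" 0 a])

lemma norm_mono_nonneg: "0 \<le> (a::'a::banach_lattice) \<Longrightarrow> a \<le> b \<Longrightarrow> norm a \<le> norm b"
  by (metis lattice_norm labs_def labs_eq_self order_trans)

lemma norm_labs [simp]: "norm (labs (a::'a::banach_lattice)) = norm a"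
  by (metis antisym lattice_norm labs_def labs_eq_self labs_nonneg order_refl)

lemma inf_add_le:
  fixes a b c :: "'a::banach_lattice"
  assumes "0 \<le> a" "0 \<le> b" "0 \<le> c"
  shows "inf c (a + b) \<le> inf c a + inf c b"
proof -
  have "inf c a + inf c b = inf (inf (c + c) (c + b)) (inf (a + c) (a + b))"
    by (simp add: add_inf_distrib_left add_inf_distrib_right ac_simps)
  moreover have "inf c (a + b) \<le> inf (inf (c + c) (c + b)) (inf (a + c) (a + b))"
    using assms by (intro le_infI) (auto intro: le_infI1 add_increasing add_increasing2)
  ultimately show ?thesis
    by simp
qed

lemma scaleR_inf_distrib:
  fixes a b :: "'a::banach_lattice"
  assumes "0 \<le> m"
  shows "m *\<^sub>R inf a b = inf (m *\<^sub>R a) (m *\<^sub>R b)"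
proof (cases "m = 0")
  case False
  with assms have m: "0 < m"
    by simp
  have "inverse m *\<^sub>R inf (m *\<^sub>R a) (m *\<^sub>R b) \<le> inf a b"
    using m by (auto intro!: le_infI
        intro: order_trans[OF scaleR_left_mono[OF inf_le1]] order_trans[OF scaleR_left_mono[OF inf_le2]])
  then have "m *\<^sub>R (inverse m *\<^sub>R inf (m *\<^sub>R a) (m *\<^sub>R b)) \<le> m *\<^sub>R inf a b"
    using assms by (rule scaleR_left_mono)
  moreover have "m *\<^sub>R inf a b \<le> inf (m *\<^sub>R a) (m *\<^sub>R b)"
    using assms by (auto intro: scaleR_left_mono)
  ultimately show ?thesis
    using m by (simp add: antisym)
qed simp

lemma inf_scaleR_le:
  fixes z u :: "'a::banach_lattice"
  assumes "0 \<le> z" "1 \<le> m"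
  shows "inf z (m *\<^sub>R u) \<le> m *\<^sub>R inf z u"
proof -
  have "z \<le> m *\<^sub>R z"
    using scaleR_right_mono[OF assms(2) assms(1)] by simp
  then have "inf z (m *\<^sub>R u) \<le> inf (m *\<^sub>R z) (m *\<^sub>R u)"
    by (auto intro: le_infI1)
  then show ?thesis
    using scaleR_inf_distrib[of m z u] assms by simp
qed

lemma inf_add_pprt_diff: "inf a b + pprt (a - b) = (a::'a::banach_lattice)"
proof -
  have "a - pprt (a - b) = inf a b"
    unfolding pprt_def diff_sup_eq_inf add_inf_distrib_left by (simp add: inf_commute)
  then show ?thesis
    by (metis diff_add_cancel)
qed

lemma inf_pprt_pprt_uminus: "inf (pprt x) (pprt (- x)) = (0::'a::banach_lattice)"
proof -
  have "pprt (- x) = pprt x - x"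
    using add_sup_distrib_right[of x 0 "- x"] unfolding pprt_def by (simp add: sup_commute)
  then have "inf (pprt x) (pprt (- x)) = pprt x + inf 0 (- x)"
    by (simp add: add_inf_distrib_left)
  also have "inf 0 (- x) = - pprt x"
    unfolding pprt_def by (metis neg_sup_eq_inf minus_zero sup_commute)
  finally show ?thesis
    by simp
qed

lemma inf_le_scaleR_inf_add_pprt:
  fixes z u W :: "'a::banach_lattice"
  assumes "0 \<le> z" "0 \<le> u" "0 \<le> W" "1 \<le> m"
  shows "inf z W \<le> m *\<^sub>R inf z u + pprt (W - m *\<^sub>R u)"
proof -
  have "inf z W = inf z (inf W (m *\<^sub>R u) + pprt (W - m *\<^sub>R u))"
    by (simp add: inf_add_pprt_diff)
  also have "\<dots> \<le> inf z (inf W (m *\<^sub>R u)) + inf z (pprt (W - m *\<^sub>R u))"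
    using assms by (intro inf_add_le) (auto intro: scaleR_nonneg_nonneg)
  also have "\<dots> \<le> inf z (m *\<^sub>R u) + pprt (W - m *\<^sub>R u)"
    by (intro add_mono inf_mono) auto
  also have "\<dots> \<le> m *\<^sub>R inf z u + pprt (W - m *\<^sub>R u)"
    using assms by (intro add_mono inf_scaleR_le) auto
  finally show ?thesis .
qed

lemma scaleR_inf_pprt_diff_le:
  fixes u W :: "'a::banach_lattice"
  assumes "0 \<le> u" "0 \<le> W" "1 \<le> m"
  shows "m *\<^sub>R inf (pprt (W - m *\<^sub>R u)) u \<le> W"
proof -
  \<comment> \<open>\<open>(W - m u)\<^sup>+\<close> is disjoint from \<open>(m u - W)\<^sup>+\<close>, the part of \<open>m u\<close> exceeding \<open>W\<close>.\<close>
  define p where "p = pprt (W - m *\<^sub>R u)"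
  define q where "q = pprt (m *\<^sub>R u - W)"
  define t where "t = m *\<^sub>R inf p u"
  have t: "0 \<le> t"
    using assms unfolding t_def p_def by (intro scaleR_nonneg_nonneg) auto
  have "t \<le> m *\<^sub>R u"
    using assms unfolding t_def by (intro scaleR_left_mono) auto
  also have "\<dots> \<le> W + q"
    unfolding q_def pprt_def by (metis add.commute diff_le_eq sup.cobounded1)
  finally have "t = inf t (W + q)"
    by (simp add: inf_absorb1)
  also have "\<dots> \<le> inf t W + inf t q"
    using assms t unfolding q_def by (intro inf_add_le) auto
  also have "inf t q \<le> 0"
  proof -
    have "inf q t \<le> inf q (m *\<^sub>R p)"
      using assms unfolding t_def by (intro inf_mono scaleR_left_mono) auto
    also have "\<dots> \<le> m *\<^sub>R inf q p"
      using assms unfolding q_def by (intro inf_scaleR_le) auto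
    also have "inf q p = 0"
      using inf_pprt_pprt_uminus[of "W - m *\<^sub>R u"] unfolding p_def q_def by (simp add: inf_commute)
    finally show ?thesis
      by (simp add: inf_commute)
  qed
  finally show ?thesis
    unfolding t_def p_def by simp
qed

lemma nonneg_eq_0_if_multiples_bounded:
  fixes a W :: "'a::banach_lattice"
  assumes "0 \<le> a" "\<And>k::nat. real k *\<^sub>R a \<le> W"
  shows "a = 0"
proof (rule ccontr)
  assume "a \<noteq> 0"
  then have "norm a > 0"
    by simp
  then obtain k :: nat where "norm W < real k * norm a"
    by (metis reals_Archimedean3)
  moreover have "norm (real k *\<^sub>R a) \<le> norm W"
    using assms by (intro norm_mono_nonneg scaleR_nonneg_nonneg) auto
  ultimately show False
    by simp
qed

lemma LIMSEQ_le_const_lattice: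
  fixes X :: "nat \<Rightarrow> 'a::banach_lattice"
  assumes "X \<longlonglongrightarrow> L" "\<And>n. a \<le> X n"
  shows "a \<le> L"
proof -
  have "norm (pprt (a - L)) \<le> norm (X n - L)" for n
  proof -
    have "pprt (a - L) \<le> pprt (X n - L)"
      using assms(2) by (intro pprt_mono diff_right_mono)
    also have "\<dots> \<le> labs (X n - L)"
      using labs_nonneg[of "X n - L"] unfolding pprt_def labs_def by (auto intro: le_supI1)
    finally show ?thesis
      by (metis norm_labs norm_mono_nonneg zero_le_pprt)
  qed
  moreover have "(\<lambda>n. norm (X n - L)) \<longlonglongrightarrow> 0"
    using assms(1) by (simp add: LIM_zero_iff tendsto_norm_zero_iff)
  ultimately have "norm (pprt (a - L)) \<le> 0"
    by (intro tendsto_lowerbound) (auto intro: always_eventually)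
  then show ?thesis
    using le_zero_iff_zero_pprt[of "a - L"] by simp
qed

lemma sum_le_suminf_lattice:
  fixes f :: "nat \<Rightarrow> 'a::banach_lattice"
  assumes "\<And>n. 0 \<le> f n" "summable f"
  shows "sum f {..<n} \<le> suminf f"
proof (rule LIMSEQ_le_const_lattice)
  show "(\<lambda>k. sum f {..<k + n}) \<longlonglongrightarrow> suminf f"
    using summable_LIMSEQ[OF assms(2)] by (rule LIMSEQ_ignore_initial_segment)
  show "sum f {..<n} \<le> sum f {..<k + n}" for k
    using assms(1) by (intro sum_mono2) auto
qed

lemma suminf_nonneg_lattice:
  fixes f :: "nat \<Rightarrow> 'a::banach_lattice"
  assumes "\<And>n. 0 \<le> f n" "summable f"
  shows "0 \<le> suminf f"
  using sum_le_suminf_lattice[OF assms, of 0] by simp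

lemma le_suminf_lattice:
  fixes f :: "nat \<Rightarrow> 'a::banach_lattice"
  assumes "\<And>n. 0 \<le> f n" "summable f"
  shows "f n \<le> suminf f"
proof -
  have "f n \<le> sum f {..<n} + f n"
    using assms(1) by (intro add_increasing sum_nonneg) auto
  also have "\<dots> \<le> suminf f"
    using sum_le_suminf_lattice[OF assms, of "Suc n"] by simp
  finally show ?thesis .
qed

lemma suminf_tail_LIMSEQ_zero:
  fixes f :: "nat \<Rightarrow> 'a::real_normed_vector"
  assumes "summable f"
  shows "(\<lambda>n. \<Sum>k. f (k + n)) \<longlonglongrightarrow> 0"
proof -
  have "(\<lambda>n. suminf f - sum f {..<n}) \<longlonglongrightarrow> suminf f - suminf f"
    using assms by (intro tendsto_diff tendsto_const summable_LIMSEQ)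
  then show ?thesis
    by (simp add: suminf_minus_initial_segment[OF assms])
qed

lemma norm_suminf_tail_le_geometric:
  fixes f :: "nat \<Rightarrow> 'a::banach"
  assumes "\<And>k. norm (f k) \<le> (1/2) ^ k"
  shows "norm (\<Sum>k. f (k + n)) \<le> 2 * (1/2) ^ n"
proof -
  have "norm (\<Sum>k. f (k + n)) \<le> (\<Sum>k. (1/2) ^ k * (1/2::real) ^ n)"
    using assms by (intro norm_suminf_le summable_mult2) (auto simp: power_add[symmetric])
  also have "\<dots> = 2 * (1/2) ^ n"
    using suminf_mult2[of "\<lambda>k. (1/2::real) ^ k" "(1/2) ^ n"] suminf_geometric[of "1/2::real"] by simp
  finally show ?thesis .
qed

section \<open>Order convergence controlled by a single positive element\<close>

lemma inf_eq_0_if_le_pprt_diff: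
  fixes a u W :: "'a::banach_lattice"
  assumes "0 \<le> a" "0 \<le> u" "0 \<le> W" "\<And>m. 1 \<le> m \<Longrightarrow> a \<le> pprt (W - m *\<^sub>R u)"
  shows "inf a u = 0"
proof (rule nonneg_eq_0_if_multiples_bounded)
  show "0 \<le> inf a u"
    using assms by simp
  show "real k *\<^sub>R inf a u \<le> W" for k
  proof (cases "k = 0")
    case False
    then have k: "1 \<le> real k"
      by simp
    then have "real k *\<^sub>R inf a u \<le> real k *\<^sub>R inf (pprt (W - real k *\<^sub>R u)) u"
      using assms(4) by (intro scaleR_left_mono inf_mono) auto
    also have "\<dots> \<le> W"
      using assms(2,3) k by (rule scaleR_inf_pprt_diff_le)
    finally show ?thesis .
  qed (use assms in simp)
qed

lemma inf_eq_0_if_dominated: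
  fixes a z u :: "'a::banach_lattice"
  assumes "0 \<le> a" "0 \<le> z" "1 \<le> C" "z \<le> C *\<^sub>R u" "inf a u = 0"
  shows "inf z a = 0"
proof -
  have "inf a z \<le> inf a (C *\<^sub>R u)"
    using assms by (intro inf_mono) auto
  also have "\<dots> \<le> C *\<^sub>R inf a u"
    using assms by (intro inf_scaleR_le) auto
  finally have "inf a z \<le> 0"
    using assms by simp
  with assms show ?thesis
    by (simp add: inf_commute antisym)
qed

lemma disjoint_eq_0_if_le_upper_bounds:
  fixes a W :: "'a::banach_lattice" and z :: "nat \<Rightarrow> 'a"
  assumes "0 \<le> a" "0 \<le> W" "\<And>n. 0 \<le> z n" "\<And>n. inf (z n) a = 0"
    and le_bounds: "\<And>d. 0 \<le> d \<Longrightarrow> (\<And>n. inf (z n) W \<le> d) \<Longrightarrow> a \<le> d"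
  shows "a = 0"
proof (rule nonneg_eq_0_if_multiples_bounded)
  \<comment> \<open>As \<open>a\<close> is disjoint from every \<open>z n\<close>, \<open>W - k a\<close> is again an upper bound of the \<open>z n \<sqinter> W\<close>.\<close>
  show "real k *\<^sub>R a \<le> W" for k
  proof (induction k)
    case (Suc k)
    define d where "d = W - real k *\<^sub>R a"
    have d: "0 \<le> d"
      using Suc unfolding d_def by simp
    have "inf (z n) W \<le> d" for n
    proof -
      have "inf (z n) (real k *\<^sub>R a) \<le> 0"
      proof (cases "k = 0")
        case False
        then have "inf (z n) (real k *\<^sub>R a) \<le> real k *\<^sub>R inf (z n) a"
          using assms by (intro inf_scaleR_le) auto
        then show ?thesis
          using assms by simp
      qed simp
      have "inf (z n) W = inf (z n) (d + real k *\<^sub>R a)"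
        unfolding d_def by simp
      also have "\<dots> \<le> inf (z n) d + inf (z n) (real k *\<^sub>R a)"
        using assms d by (intro inf_add_le scaleR_nonneg_nonneg) auto
      also have "\<dots> \<le> d"
        using \<open>inf (z n) (real k *\<^sub>R a) \<le> 0\<close> by (metis add.right_neutral add_mono inf.cobounded2)
      finally show ?thesis .
    qed
    with d have "a \<le> d"
      by (rule le_bounds)
    then show ?case
      unfolding d_def by (simp add: algebra_simps)
  qed (use assms in simp)
qed (use assms in simp)

lemma ord_conv_zero_if_eventual_upper_bounds:
  fixes s :: "nat \<Rightarrow> 'a::banach_lattice"
  assumes nonneg: "\<And>n. 0 \<le> s n" and bounded: "\<And>n. s n \<le> W"
    and glb: "\<And>h. (\<And>d. eventually (\<lambda>n. s n \<le> d) sequentially \<Longrightarrow> h \<le> d) \<Longrightarrow> h \<le> 0"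
  shows "ord_conv UNIV (\<le>) s 0"
  unfolding ord_conv_def
proof (intro exI conjI)
  define U where "U = {d. eventually (\<lambda>n. s n \<le> d) sequentially}"
  show "net_decr_to_zero U (\<lambda>d1 d2. d2 \<le> d1) id"
    unfolding net_decr_to_zero_def directed_def
  proof (intro conjI ballI allI impI)
    have "W \<in> U"
      using bounded by (simp add: U_def)
    then show "U \<noteq> {}"
      by blast
    show "\<exists>c\<in>U. c \<le> d1 \<and> c \<le> d2" if "d1 \<in> U" "d2 \<in> U" for d1 d2
      using that unfolding U_def by (intro bexI[of _ "inf d1 d2"]) (auto elim: eventually_elim2)
    show "0 \<le> id d" if d: "d \<in> U" for d
    proof -
      obtain N where "\<forall>n\<ge>N. s n \<le> d"
        using d unfolding U_def eventually_sequentially by blast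
      then show ?thesis
        using nonneg[of N] by (simp add: order_trans)
    qed
    show "h \<le> 0" if "\<forall>d\<in>U. h \<le> id d" for h
      using that by (intro glb) (simp add: U_def)
  qed auto
  show "\<forall>d\<in>U. \<exists>n0\<in>UNIV. \<forall>n\<in>UNIV. n0 \<le> n \<longrightarrow> labs (s n - 0) \<le> id d"
    using nonneg unfolding U_def eventually_sequentially by (simp add: labs_eq_self)
qed

lemma le_pprt_diff_if_le_eventual_upper_bounds:
  fixes z :: "nat \<Rightarrow> 'a::banach_lattice"
  assumes z: "\<And>n. 0 \<le> z n" and u: "0 \<le> u" and W: "0 \<le> W"
    and summable: "summable (\<lambda>n. norm (inf (z n) u))"
    and h: "\<And>d. eventually (\<lambda>n. inf (z n) W \<le> d) sequentially \<Longrightarrow> h \<le> d"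
    and m: "1 \<le> m"
  shows "h \<le> pprt (W - m *\<^sub>R u)"
proof -
  define g where "g n = inf (z n) u" for n
  have g: "0 \<le> g n" for n
    using z u unfolding g_def by simp
  have "summable g"
    using summable unfolding g_def by (rule summable_norm_cancel)
  have "(\<lambda>N. m *\<^sub>R (\<Sum>k. g (k + N)) + pprt (W - m *\<^sub>R u)) \<longlonglongrightarrow> pprt (W - m *\<^sub>R u)"
    using tendsto_add[OF tendsto_scaleR[OF tendsto_const suminf_tail_LIMSEQ_zero[OF \<open>summable g\<close>]]
        tendsto_const, of m "pprt (W - m *\<^sub>R u)"]
    by simp
  moreover have "h \<le> m *\<^sub>R (\<Sum>k. g (k + N)) + pprt (W - m *\<^sub>R u)" for N
  proof (rule h)
    have "inf (z n) W \<le> m *\<^sub>R (\<Sum>k. g (k + N)) + pprt (W - m *\<^sub>R u)" if "N \<le> n" for n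
    proof -
      have "g n \<le> (\<Sum>k. g (k + N))"
        using le_suminf_lattice[OF g summable_ignore_initial_segment[OF \<open>summable g\<close>], of "n - N" N]
          that by simp
      then have "m *\<^sub>R g n \<le> m *\<^sub>R (\<Sum>k. g (k + N))"
        using m by (intro scaleR_left_mono) auto
      then show ?thesis
        using inf_le_scaleR_inf_add_pprt[OF z u W m, of n] unfolding g_def
        by (meson add_right_mono order_trans)
    qed
    then show "eventually (\<lambda>n. inf (z n) W \<le> m *\<^sub>R (\<Sum>k. g (k + N)) + pprt (W - m *\<^sub>R u)) sequentially"
      by (auto simp: eventually_sequentially)
  qed
  ultimately show ?thesis
    by (rule LIMSEQ_le_const_lattice)
qed

lemma ord_conv_inf_if_summable_inf:
  fixes z :: "nat \<Rightarrow> 'a::banach_lattice"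
  assumes z: "\<And>n. 0 \<le> z n" and u: "0 \<le> u" and W: "0 \<le> W"
    and dominated: "\<And>n. \<exists>C\<ge>1. z n \<le> C *\<^sub>R u"
    and summable: "summable (\<lambda>n. norm (inf (z n) u))"
  shows "ord_conv UNIV (\<le>) (\<lambda>n. inf (z n) W) 0"
proof (rule ord_conv_zero_if_eventual_upper_bounds[where W = W])
  fix h :: 'a
  assume h: "\<And>d. eventually (\<lambda>n. inf (z n) W \<le> d) sequentially \<Longrightarrow> h \<le> d"
  have below: "h \<le> pprt (W - m *\<^sub>R u)" if "1 \<le> m" for m
    using z u W summable h that by (rule le_pprt_diff_if_le_eventual_upper_bounds)
  have "inf (pprt h) u = 0"
    using zero_le_pprt u W by (rule inf_eq_0_if_le_pprt_diff) (metis below pprt_mono pprt_eq_id zero_le_pprt)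
  then have "inf (z n) (pprt h) = 0" for n
    using dominated[of n] z by (auto intro: inf_eq_0_if_dominated)
  moreover have "pprt h \<le> d" if "0 \<le> d" "\<And>n. inf (z n) W \<le> d" for d
    using that h[of d] unfolding pprt_def by simp
  ultimately have "pprt h = 0"
    using z W by (intro disjoint_eq_0_if_le_upper_bounds[of "pprt h" W z]) auto
  then show "h \<le> 0"
    by (simp add: le_zero_iff_zero_pprt)
qed (use z W in auto)

lemma summable_inf_weighted_series:
  fixes y :: "nat \<Rightarrow> 'a::banach_lattice"
  defines "f \<equiv> \<lambda>k. ((1/2) ^ k / (1 + norm (y k))) *\<^sub>R y k"
  assumes y: "\<And>n. 0 \<le> y n" and small: "\<And>n. norm (inf (y n) (\<Sum>k<n. f k)) < (1/2) ^ n"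
  shows "0 \<le> suminf f" and "\<exists>C\<ge>1. y n \<le> C *\<^sub>R suminf f"
    and "summable (\<lambda>n. norm (inf (y n) (suminf f)))"
proof -
  have pos: "0 < 1 + norm (y k)" for k
    using norm_ge_zero[of "y k"] by linarith
  have f: "0 \<le> f k" for k
    using y unfolding f_def by (intro scaleR_nonneg_nonneg) auto
  have norm_f: "norm (f k) \<le> (1/2) ^ k" for k
  proof -
    have "norm (y k) / (1 + norm (y k)) \<le> 1"
      using pos[of k] by (simp add: divide_le_eq_1)
    from mult_left_le[OF this, of "(1/2) ^ k"] show ?thesis
      unfolding f_def by simp
  qed
  have "summable (\<lambda>k. norm (f k))"
    using norm_f by (intro summable_comparison_test[OF _ summable_geometric[of "1/2::real"]]) auto
  then have "summable f"
    by (rule summable_norm_cancel)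
  show "0 \<le> suminf f"
    using f \<open>summable f\<close> by (rule suminf_nonneg_lattice)
  show "\<exists>C\<ge>1. y n \<le> C *\<^sub>R suminf f"
  proof (intro exI conjI)
    define C where "C = 2 ^ n * (1 + norm (y n))"
    show "1 \<le> C"
      unfolding C_def using mult_mono[of 1 "2 ^ n" 1 "1 + norm (y n)"] by simp
    have "C * ((1/2) ^ n / (1 + norm (y n))) = 1"
      unfolding C_def using pos[of n] by (simp add: power_one_over less_imp_neq[symmetric])
    then have "y n = C *\<^sub>R f n"
      unfolding f_def by (simp only: scaleR_scaleR scaleR_one)
    also have "\<dots> \<le> C *\<^sub>R suminf f"
      using \<open>1 \<le> C\<close> le_suminf_lattice[OF f \<open>summable f\<close>] by (intro scaleR_left_mono) auto
    finally show "y n \<le> C *\<^sub>R suminf f" .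
  qed
  have "norm (inf (y n) (suminf f)) \<le> 3 * (1/2) ^ n" for n
  proof -
    define T where "T = (\<Sum>k. f (k + n))"
    have T: "0 \<le> T"
      unfolding T_def using f summable_ignore_initial_segment[OF \<open>summable f\<close>] by (rule suminf_nonneg_lattice)
    have "inf (y n) (suminf f) = inf (y n) ((\<Sum>k<n. f k) + T)"
      unfolding T_def using suminf_split_initial_segment[OF \<open>summable f\<close>, of n] by (simp add: add.commute)
    also have "\<dots> \<le> inf (y n) (\<Sum>k<n. f k) + inf (y n) T"
      using f T y by (intro inf_add_le sum_nonneg) auto
    also have "\<dots> \<le> inf (y n) (\<Sum>k<n. f k) + T"
      by (intro add_mono) auto
    finally have "norm (inf (y n) (suminf f)) \<le> norm (inf (y n) (\<Sum>k<n. f k) + T)"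
      using y \<open>0 \<le> suminf f\<close> by (intro norm_mono_nonneg) auto
    also have "\<dots> \<le> norm (inf (y n) (\<Sum>k<n. f k)) + norm T"
      by (rule norm_triangle_ineq)
    also have "\<dots> \<le> 3 * (1/2) ^ n"
      using small[of n] norm_suminf_tail_le_geometric[OF norm_f, of n] unfolding T_def by simp
    finally show ?thesis .
  qed
  then show "summable (\<lambda>n. norm (inf (y n) (suminf f)))"
    by (intro summable_comparison_test[OF _ summable_mult[OF summable_geometric[of "1/2::real"]]]) auto
qed

section \<open>Embedded sequences of un-convergent nets\<close>

lemma directed_upper_bound_not_below:
  assumes "directed A le" "a \<in> A" "b \<in> A"
  shows "\<exists>c\<in>A. le a c \<and> le b c \<and> ((\<nexists>m. m \<in> A \<and> (\<forall>x\<in>A. le x m)) \<longrightarrow> \<not> le c a)"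
proof (cases "\<exists>m\<in>A. \<forall>x\<in>A. le x m")
  case True
  with assms show ?thesis
    unfolding directed_def by blast
next
  case False
  then obtain a' where a': "a' \<in> A" "\<not> le a' a"
    using assms(2) by blast
  obtain c where c: "c \<in> A" "le a c" "le a' c"
    using assms a' unfolding directed_def by meson
  obtain d where "d \<in> A" "le c d" "le b d"
    using assms c unfolding directed_def by meson
  moreover have "le a d" "\<not> le d a"
    using assms a' c \<open>d \<in> A\<close> \<open>le c d\<close> unfolding directed_def by meson+
  ultimately show ?thesis
    by blast
qed

lemma un_conv_next_index:
  assumes dir: "directed A le" and un: "un_conv A le x l" and a: "a \<in> A" and \<epsilon>: "0 < \<epsilon>"
  shows "\<exists>a'\<in>A. le a a' \<and> ((\<nexists>m. m \<in> A \<and> (\<forall>x\<in>A. le x m)) \<longrightarrow> \<not> le a' a)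
           \<and> norm (inf (labs (x a' - l)) (labs S)) < \<epsilon>"
proof -
  obtain a0 where a0: "a0 \<in> A" "\<forall>b\<in>A. le a0 b \<longrightarrow> norm (inf (labs (x b - l)) (labs S)) < \<epsilon>"
    using un \<epsilon> unfolding un_conv_def by blast
  with directed_upper_bound_not_below[OF dir a a0(1)] show ?thesis
    by blast
qed

lemma un_conv_embedded_seq_almost_disjoint:
  fixes x :: "'i \<Rightarrow> 'a::banach_lattice" and g :: "nat \<Rightarrow> 'i \<Rightarrow> 'a" and e :: "nat \<Rightarrow> real"
  assumes dir: "directed A le" and un: "un_conv A le x l" and e: "\<And>n. 0 < e n"
  shows "\<exists>s. embedded_seq A le s
           \<and> (\<forall>n. norm (inf (labs (x (s n) - l)) (labs (\<Sum>k<n. g k (s k)))) < e n)"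
proof -
  define z where "z a = labs (x a - l)" for a
  define nomax where "nomax \<longleftrightarrow> (\<nexists>m. m \<in> A \<and> (\<forall>a\<in>A. le a m))"
  have next_index: "\<exists>a'\<in>A. le a a' \<and> (nomax \<longrightarrow> \<not> le a' a) \<and> norm (inf (z a') (labs S)) < \<epsilon>"
    if "a \<in> A" "0 < \<epsilon>" for a S \<epsilon>
    using un_conv_next_index[OF dir un that] unfolding z_def nomax_def .
  \<comment> \<open>The state \<open>(a, T)\<close> carries the index and the sum \<open>T\<close> of the \<open>g\<close>-terms chosen before it.\<close>
  define P where "P n = (\<lambda>(a, T). a \<in> A \<and> norm (inf (z a) (labs T)) < e n \<and> (n = 0 \<longrightarrow> T = 0))"
    for n
  define Q where "Q n = (\<lambda>(a, T) (a', T'). T' = T + g n a \<and> le a a' \<and> (nomax \<longrightarrow> \<not> le a' a))"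
    for n
  obtain a0 where "a0 \<in> A"
    using dir unfolding directed_def by blast
  then have "P 0 (a0, 0)"
    using e[of 0] unfolding P_def by (simp add: labs_eq_self z_def labs_nonneg inf_absorb2)
  moreover have "\<exists>p'. P (Suc n) p' \<and> Q n p p'" if "P n p" for n p
  proof -
    obtain a T where p: "p = (a, T)"
      by (cases p)
    with that have "a \<in> A"
      unfolding P_def by simp
    then obtain a' where "a' \<in> A" "le a a'" "nomax \<longrightarrow> \<not> le a' a"
      "norm (inf (z a') (labs (T + g n a))) < e (Suc n)"
      using next_index e by blast
    then show ?thesis
      unfolding P_def Q_def p by auto
  qed
  ultimately obtain F where F: "\<And>n. P n (F n) \<and> Q n (F n) (F (Suc n))"
    using dependent_nat_choice[of P Q] by blast
  define s where "s n = fst (F n)" for n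
  have sums: "snd (F n) = (\<Sum>k<n. g k (s k))" for n
  proof (induction n)
    case 0
    then show ?case
      using F[of 0] unfolding P_def by (auto split: prod.splits)
  next
    case (Suc n)
    then show ?case
      using F[of n] unfolding Q_def s_def by (auto split: prod.splits)
  qed
  have "s n \<in> A" "le (s n) (s (Suc n))" "nomax \<longrightarrow> \<not> le (s (Suc n)) (s n)" for n
    using F[of n] unfolding P_def Q_def s_def by (auto split: prod.splits)
  then have "embedded_seq A le s"
    unfolding embedded_seq_def nomax_def by blast
  moreover have "norm (inf (z (s n)) (labs (\<Sum>k<n. g k (s k)))) < e n" for n
    using F[of n] sums[of n] unfolding P_def s_def by (auto split: prod.splits)
  ultimately show ?thesis
    unfolding z_def by blast
qed

lemma un_conv_imp_embedded_uo_conv: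
  fixes x :: "'i \<Rightarrow> 'a::banach_lattice"
  assumes "directed A le" "un_conv A le x l"
  shows "\<exists>s. embedded_seq A le s \<and> uo_conv UNIV (\<le>) (x \<circ> s) l"
proof -
  define z where "z a = labs (x a - l)" for a
  obtain s where s: "embedded_seq A le s"
    and small: "\<And>n. norm (inf (z (s n)) (labs (\<Sum>k<n. ((1/2) ^ k / (1 + norm (z (s k)))) *\<^sub>R z (s k))))
                  < (1/2) ^ n"
    using un_conv_embedded_seq_almost_disjoint[OF assms,
        where g = "\<lambda>k a. ((1/2) ^ k / (1 + norm (z a))) *\<^sub>R z a" and e = "\<lambda>n. (1/2) ^ n"]
    unfolding z_def by auto
  define f where "f k = ((1/2) ^ k / (1 + norm (z (s k)))) *\<^sub>R z (s k)" for k
  have z: "0 \<le> z a" for a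
    unfolding z_def by (rule labs_nonneg)
  have "norm (inf (z (s n)) (\<Sum>k<n. f k)) < (1/2) ^ n" for n
    using small[of n] z unfolding f_def by (simp add: labs_eq_self sum_nonneg scaleR_nonneg_nonneg)
  then have u: "0 \<le> suminf f" "\<And>n. \<exists>C\<ge>1. z (s n) \<le> C *\<^sub>R suminf f"
    and summable: "summable (\<lambda>n. norm (inf (z (s n)) (suminf f)))"
    using summable_inf_weighted_series[of "z \<circ> s"] z unfolding f_def by auto
  have "ord_conv UNIV (\<le>) (\<lambda>n. inf (labs ((x \<circ> s) n - l)) (labs w)) 0" for w
    using ord_conv_inf_if_summable_inf[OF z u(1) labs_nonneg u(2) summable] unfolding z_def by simp
  with s show ?thesis
    unfolding uo_conv_def by blast
qed

section \<open>Order continuous norms\<close>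

lemma ord_conv_imp_norm_small:
  fixes y :: "'i \<Rightarrow> 'a::banach_lattice"
  assumes "order_continuous_norm TYPE('a)" "ord_conv A le y 0" "0 < \<epsilon>"
  shows "\<exists>a0\<in>A. \<forall>a\<in>A. le a0 a \<longrightarrow> norm (y a) < \<epsilon>"
proof -
  obtain B leB and d :: "'a \<Rightarrow> 'a" where d: "net_decr_to_zero B leB d"
    and dominates: "\<forall>b\<in>B. \<exists>a0\<in>A. \<forall>a\<in>A. le a0 a \<longrightarrow> labs (y a - 0) \<le> d b"
    using assms(2) unfolding ord_conv_def by blast
  obtain b where b: "b \<in> B" "\<forall>b'\<in>B. leB b b' \<longrightarrow> norm (d b') < \<epsilon>"
    using assms(1,3) d unfolding order_continuous_norm_def by blast
  then have "norm (d b) < \<epsilon>"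
    using d unfolding net_decr_to_zero_def directed_def by blast
  moreover obtain a0 where "a0 \<in> A" "\<forall>a\<in>A. le a0 a \<longrightarrow> labs (y a) \<le> d b"
    using dominates b(1) by auto
  ultimately show ?thesis
    by (metis labs_nonneg norm_labs norm_mono_nonneg order.strict_trans1)
qed

lemma uo_conv_imp_un_conv:
  assumes "order_continuous_norm TYPE('a::banach_lattice)" "uo_conv A le (x :: 'i \<Rightarrow> 'a) l"
  shows "un_conv A le x l"
  using assms ord_conv_imp_norm_small unfolding uo_conv_def un_conv_def by blast

lemma directed_sequentially: "directed (UNIV :: nat set) (\<le>)"
  unfolding directed_def by (auto intro: order_trans) (meson le_cases order_refl)

lemma embedded_seq_sequentially_imp_strict_mono:
  "embedded_seq (UNIV :: nat set) (\<le>) s \<Longrightarrow> strict_mono s"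
  unfolding embedded_seq_def strict_mono_Suc_iff
  by (metis UNIV_I le_less_linear not_less_eq_eq)

lemma un_conv_sequentially_iff:
  "un_conv UNIV (\<le>) (x :: nat \<Rightarrow> 'a::banach_lattice) l \<longleftrightarrow>
     (\<forall>u. (\<lambda>n. norm (inf (labs (x n - l)) (labs u))) \<longlonglongrightarrow> 0)"
  unfolding un_conv_def LIMSEQ_iff by simp

lemma un_conv_subseq:
  assumes "un_conv UNIV (\<le>) (x :: nat \<Rightarrow> 'a::banach_lattice) l" "strict_mono (r :: nat \<Rightarrow> nat)"
  shows "un_conv UNIV (\<le>) (x \<circ> r) l"
  unfolding un_conv_sequentially_iff
proof
  fix u
  have "(\<lambda>n. norm (inf (labs (x n - l)) (labs u))) \<longlonglongrightarrow> 0"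
    using assms(1) unfolding un_conv_sequentially_iff by blast
  from LIMSEQ_subseq_LIMSEQ[OF this assms(2)]
  show "(\<lambda>n. norm (inf (labs ((x \<circ> r) n - l)) (labs u))) \<longlonglongrightarrow> 0"
    by (simp add: o_def)
qed

lemma LIMSEQ_if_subseq_has_LIMSEQ_subseq:
  fixes X :: "nat \<Rightarrow> 'a::metric_space"
  assumes "\<And>r :: nat \<Rightarrow> nat. strict_mono r \<Longrightarrow> \<exists>q :: nat \<Rightarrow> nat. strict_mono q \<and> (X \<circ> r \<circ> q) \<longlonglongrightarrow> L"
  shows "X \<longlonglongrightarrow> L"
proof (rule ccontr)
  assume "\<not> X \<longlonglongrightarrow> L"
  then obtain \<epsilon> where "0 < \<epsilon>" and "\<not> eventually (\<lambda>n. dist (X n) L < \<epsilon>) sequentially"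
    unfolding tendsto_iff by blast
  then have "infinite {n. \<not> dist (X n) L < \<epsilon>}"
    by (simp add: not_eventually cofinite_eq_sequentially[symmetric] frequently_cofinite)
  then obtain r :: "nat \<Rightarrow> nat" where r: "strict_mono r" "\<And>n. \<not> dist (X (r n)) L < \<epsilon>"
    using infinite_enumerate by blast
  obtain q where "(X \<circ> r \<circ> q) \<longlonglongrightarrow> L"
    using assms[OF r(1)] by blast
  then have "eventually (\<lambda>n. dist (X (r (q n))) L < \<epsilon>) sequentially"
    using \<open>0 < \<epsilon>\<close> unfolding tendsto_iff by simp
  with r(2) show False
    by simp
qed

lemma un_conv_iff_subseq_uo_conv:
  fixes x :: "nat \<Rightarrow> 'a::banach_lattice"
  assumes "order_continuous_norm TYPE('a)"
  shows "un_conv UNIV (\<le>) x l \<longleftrightarrow>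
    (\<forall>r :: nat \<Rightarrow> nat. strict_mono r \<longrightarrow>
      (\<exists>q :: nat \<Rightarrow> nat. strict_mono q \<and> uo_conv UNIV (\<le>) (x \<circ> r \<circ> q) l))"
proof (intro iffI allI impI)
  fix r :: "nat \<Rightarrow> nat"
  assume "un_conv UNIV (\<le>) x l" "strict_mono r"
  then have "un_conv UNIV (\<le>) (x \<circ> r) l"
    by (rule un_conv_subseq)
  then obtain q where q: "embedded_seq UNIV (\<le>) q" "uo_conv UNIV (\<le>) (x \<circ> r \<circ> q) l"
    using un_conv_imp_embedded_uo_conv[OF directed_sequentially] by blast
  then show "\<exists>q :: nat \<Rightarrow> nat. strict_mono q \<and> uo_conv UNIV (\<le>) (x \<circ> r \<circ> q) l"
    using embedded_seq_sequentially_imp_strict_mono[OF q(1)] by blast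
next
  assume subseq: "\<forall>r :: nat \<Rightarrow> nat. strict_mono r \<longrightarrow>
    (\<exists>q :: nat \<Rightarrow> nat. strict_mono q \<and> uo_conv UNIV (\<le>) (x \<circ> r \<circ> q) l)"
  show "un_conv UNIV (\<le>) x l"
    unfolding un_conv_sequentially_iff
  proof
    fix u
    show "(\<lambda>n. norm (inf (labs (x n - l)) (labs u))) \<longlonglongrightarrow> 0"
    proof (rule LIMSEQ_if_subseq_has_LIMSEQ_subseq)
      fix r :: "nat \<Rightarrow> nat"
      assume "strict_mono r"
      then obtain q :: "nat \<Rightarrow> nat" where "strict_mono q" "un_conv UNIV (\<le>) (x \<circ> r \<circ> q) l"
        using subseq uo_conv_imp_un_conv[OF assms] by blast
      then show "\<exists>q. strict_mono q \<and> ((\<lambda>n. norm (inf (labs (x n - l)) (labs u))) \<circ> r \<circ> q) \<longlonglongrightarrow> 0"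
        unfolding un_conv_sequentially_iff by (auto simp: o_def)
    qed
  qed
qed

theorem theorem5p2:
  shows "(\<forall>(A :: 'i set) le (x :: 'i \<Rightarrow> 'a) l. directed A le \<longrightarrow> un_conv A le x l \<longrightarrow>
            (\<exists>s. embedded_seq A le s \<and> uo_conv UNIV (\<le>) (x \<circ> s) l))
       \<and> (order_continuous_norm TYPE('a::banach_lattice) \<longrightarrow>
            (\<forall>(A :: 'i set) le (x :: 'i \<Rightarrow> 'a) l. directed A le \<longrightarrow> un_conv A le x l \<longrightarrow>
              (\<exists>s. embedded_seq A le s \<and> uo_conv UNIV (\<le>) (x \<circ> s) l
                   \<and> un_conv UNIV (\<le>) (x \<circ> s) l))
          \<and> (\<forall>(x :: nat \<Rightarrow> 'a) l. un_conv UNIV (\<le>) x l \<longleftrightarrow>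
              (\<forall>r :: nat \<Rightarrow> nat. strict_mono r \<longrightarrow> (\<exists>q :: nat \<Rightarrow> nat. strict_mono q \<and> uo_conv UNIV (\<le>) (x \<circ> r \<circ> q) l))))"
  using un_conv_imp_embedded_uo_conv uo_conv_imp_un_conv un_conv_iff_subseq_uo_conv by blast

end
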